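(* Fix integers $p\ge 3$, $q\ge 1$ and a real $\eta$ with $0<\eta<\frac{1}{7p^5q}$. For all sufficiently large $n$, for the graph $G$ and partition $V_1,\dots,V_p$ described in the context, the set $W=\bigcup_{i=1}^p W_i$, where $W_i=\{v\in V_i: d_{V_i}(v)\ge 2\eta n\}$, satisfies $|W|\le \frac12\eta n$.
   Context: $B_{p,q}=K_p\nabla qK_1$ is the join of a clique $K_p$ and an independent set of $q$ vertices. $\mathcal{G}(n,p,q)$ is the set of $n$-vertex graphs with chromatic number greater than $p$ that contain no subgraph isomorphic to $B_{p,q}$ and have the maximum number of edges among all such graphs. $G$ is a graph in $\mathcal{G}(n,p,q)$ whose minimum degree equals $\min_{F\in\mathcal{G}(n,p,q)}\delta(F)$. For $U\subseteq V(G)$, $e(U)$ is the number of edges of $G$ with both ends in $U$, and $d_U(v)=|N_G(v)\cap U|$. $V(G)=V_1\cup\cdots\cup V_p$ is a vertex partition of $G$ into $p$ parts minimizing $\sum_{i=1}^p e(V_i)$ among all partitions of $V(G)$ into $p$ parts. *)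

theory Defs
  imports Complex_Main
begin

definition simple_graph :: "nat \<Rightarrow> nat set set \<Rightarrow> bool" where
  "simple_graph n E \<longleftrightarrow> (\<forall>e\<in>E. e \<subseteq> {..<n} \<and> card e = 2)"

definition colorable :: "nat \<Rightarrow> nat set set \<Rightarrow> nat \<Rightarrow> bool" where
  "colorable n E k \<longleftrightarrow> (\<exists>c::nat \<Rightarrow> nat. (\<forall>v<n. c v < k) \<and>
      (\<forall>u v. {u, v} \<in> E \<longrightarrow> u \<noteq> v \<longrightarrow> c u \<noteq> c v))"

definition chromatic_number :: "nat \<Rightarrow> nat set set \<Rightarrow> nat" where
  "chromatic_number n E = (LEAST k. colorable n E k)"

(* G contains a (not necessarily induced) subgraph isomorphic to B_{p,q} = K_p join qK_1 *)
definition contains_book :: "nat \<Rightarrow> nat set set \<Rightarrow> nat \<Rightarrow> nat \<Rightarrow> bool" where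
  "contains_book n E p q \<longleftrightarrow> (\<exists>K Q. K \<subseteq> {..<n} \<and> Q \<subseteq> {..<n} \<and> K \<inter> Q = {} \<and>
      card K = p \<and> card Q = q \<and>
      (\<forall>u\<in>K. \<forall>v\<in>K. u \<noteq> v \<longrightarrow> {u, v} \<in> E) \<and>
      (\<forall>u\<in>K. \<forall>v\<in>Q. {u, v} \<in> E))"

definition admissible :: "nat \<Rightarrow> nat \<Rightarrow> nat \<Rightarrow> nat set set \<Rightarrow> bool" where
  "admissible n p q E \<longleftrightarrow> simple_graph n E \<and> chromatic_number n E > p \<and> \<not> contains_book n E p q"

definition in_GG :: "nat \<Rightarrow> nat \<Rightarrow> nat \<Rightarrow> nat set set \<Rightarrow> bool" where
  "in_GG n p q E \<longleftrightarrow> admissible n p q E \<and> (\<forall>E'. admissible n p q E' \<longrightarrow> card E' \<le> card E)"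

definition degree :: "nat set set \<Rightarrow> nat \<Rightarrow> nat" where
  "degree E v = card {u. {u, v} \<in> E \<and> u \<noteq> v}"

definition min_degree :: "nat \<Rightarrow> nat set set \<Rightarrow> nat" where
  "min_degree n E = Min (degree E ` {..<n})"

definition deg_in :: "nat set set \<Rightarrow> nat set \<Rightarrow> nat \<Rightarrow> nat" where
  "deg_in E U v = card {u\<in>U. {u, v} \<in> E \<and> u \<noteq> v}"

definition edges_in :: "nat set set \<Rightarrow> nat set \<Rightarrow> nat" where
  "edges_in E U = card {e\<in>E. e \<subseteq> U}"

definition is_partition :: "nat \<Rightarrow> nat \<Rightarrow> (nat \<Rightarrow> nat set) \<Rightarrow> bool" where
  "is_partition n p V \<longleftrightarrow> (\<Union>i<p. V i) = {..<n} \<and>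
      (\<forall>i<p. \<forall>j<p. i \<noteq> j \<longrightarrow> V i \<inter> V j = {})"

definition part_cost :: "nat set set \<Rightarrow> nat \<Rightarrow> (nat \<Rightarrow> nat set) \<Rightarrow> nat" where
  "part_cost E p V = (\<Sum>i<p. edges_in E (V i))"

definition optimal_partition :: "nat \<Rightarrow> nat set set \<Rightarrow> nat \<Rightarrow> (nat \<Rightarrow> nat set) \<Rightarrow> bool" where
  "optimal_partition n E p V \<longleftrightarrow> is_partition n p V \<and>
      (\<forall>V'. is_partition n p V' \<longrightarrow> part_cost E p V \<le> part_cost E p V')"

end

theory Submission
  imports Defs
begin

(* Fueredi's greedy argument: starting from A_0 = V(G), repeatedly pick a vertex x_i of maximum
   degree in G[A_i] and pass to A_{i+1} = N(x_i) \<inter> A_i.  Since G has no B_{p,q}, |A_p| < q, and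
   sorting the vertices by the last index i < p with v \<in> A_i gives p classes whose inside edges,
   added to e(G), number at most the edges of the complete p-partite graph on these classes plus qn.
   Replacing p+3 vertices of that complete p-partite graph by a disjoint K_{p-2} joined to C_5
   loses O(n) edges and yields a graph with chromatic number p+1 and clique number p, hence an
   admissible one; extremality of G then bounds the number of edges inside the classes, and so
   inside the parts of an optimal partition, by O(n).  Every vertex of W has at least 2\<eta>n
   neighbours in its own part, so |W| = O(1/\<eta>), which is below \<eta>n/2 for large n. *)

definition adjacency :: "nat set set \<Rightarrow> nat \<Rightarrow> nat \<Rightarrow> nat" where
  "adjacency E u v = (if {u, v} \<in> E \<and> u \<noteq> v then 1 else 0)"

lemma adjacency_commute: "adjacency E u v = adjacency E v u"
  unfolding adjacency_def by (simp add: insert_commute eq_commute)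

lemma deg_in_eq_sum_adjacency: "finite U \<Longrightarrow> deg_in E U v = (\<Sum>u\<in>U. adjacency E u v)"
  unfolding deg_in_def adjacency_def by (simp add: sum.If_cases Int_def)

lemma deg_in_filter_eq_sum_adjacency:
  "finite A \<Longrightarrow> deg_in E {u\<in>A. P u} v = (\<Sum>u\<in>A. if P u then adjacency E u v else 0)"
  by (simp add: deg_in_eq_sum_adjacency sum.inter_filter)

lemma simple_graph_card_edge: "simple_graph n E \<Longrightarrow> e \<in> E \<Longrightarrow> card e = 2"
  unfolding simple_graph_def by blast

lemma edges_in_lessThan: "simple_graph n E \<Longrightarrow> edges_in E {..<n} = card E"
  unfolding simple_graph_def edges_in_def by (metis (no_types, lifting) Collect_cong Collect_mem_eq)

lemma card_incident_edges_in:
  assumes "v \<in> U" and "\<And>e. e \<in> E \<Longrightarrow> card e = 2"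
  shows "card {e\<in>E. e \<subseteq> U \<and> v \<in> e} = deg_in E U v"
proof -
  have "bij_betw (\<lambda>u. {u, v}) {u\<in>U. {u, v} \<in> E \<and> u \<noteq> v} {e\<in>E. e \<subseteq> U \<and> v \<in> e}"
  proof (rule bij_betwI')
    show "({x, v} = {y, v}) = (x = y)" for x y
      by (auto simp: doubleton_eq_iff)
    show "{x, v} \<in> {e\<in>E. e \<subseteq> U \<and> v \<in> e}" if "x \<in> {u\<in>U. {u, v} \<in> E \<and> u \<noteq> v}" for x
      using that assms(1) by auto
    fix e assume e: "e \<in> {e\<in>E. e \<subseteq> U \<and> v \<in> e}"
    then obtain a b where ab: "e = {a, b}" "a \<noteq> b"
      using assms(2)[of e] e by (auto simp: card_2_iff)
    show "\<exists>x\<in>{u\<in>U. {u, v} \<in> E \<and> u \<noteq> v}. e = {x, v}"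
    proof (cases "a = v")
      case True
      then show ?thesis using e ab by (intro bexI[of _ b]) (auto simp: insert_commute)
    next
      case False
      then show ?thesis using e ab by (intro bexI[of _ a]) auto
    qed
  qed
  then show ?thesis unfolding deg_in_def by (simp add: bij_betw_same_card)
qed

lemma sum_deg_in:
  assumes "finite U" and "\<And>e. e \<in> E \<Longrightarrow> card e = 2"
  shows "(\<Sum>v\<in>U. deg_in E U v) = 2 * edges_in E U"
proof -
  define EU where "EU = {e\<in>E. e \<subseteq> U}"
  have "finite EU"
    unfolding EU_def by (rule finite_subset[of _ "Pow U"]) (use assms in auto)
  have "2 * edges_in E U = (\<Sum>e\<in>EU. card e)"
    using assms unfolding edges_in_def EU_def by simp
  also have "\<dots> = (\<Sum>e\<in>EU. \<Sum>v\<in>U. if v \<in> e then 1 else 0)"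
    using assms(1) by (intro sum.cong refl) (auto simp: EU_def sum.If_cases Int_absorb1)
  also have "\<dots> = (\<Sum>v\<in>U. \<Sum>e\<in>EU. if v \<in> e then 1 else 0)"
    by (rule sum.swap)
  also have "\<dots> = (\<Sum>v\<in>U. card {e\<in>EU. v \<in> e})"
    using \<open>finite EU\<close> by (simp add: sum.If_cases Int_def)
  also have "\<dots> = (\<Sum>v\<in>U. deg_in E U v)"
    using card_incident_edges_in[OF _ assms(2)] by (intro sum.cong refl) (simp add: EU_def conj_assoc)
  finally show ?thesis by simp
qed

lemma sum_sum_adjacency:
  assumes "simple_graph n E"
  shows "(\<Sum>v<n. \<Sum>u<n. adjacency E u v) = 2 * card E"
  using sum_deg_in[of "{..<n}" E] simple_graph_card_edge[OF assms] edges_in_lessThan[OF assms]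
  by (simp add: deg_in_eq_sum_adjacency)

lemma twice_part_cost_levels:
  assumes sg: "simple_graph n E" and L: "\<And>v. v < n \<Longrightarrow> L v < p"
  shows "2 * part_cost E p (\<lambda>i. {v\<in>{..<n}. L v = i})
       = (\<Sum>v<n. \<Sum>u<n. if L u = L v then adjacency E u v else 0)"
proof -
  define F where "F i = {v\<in>{..<n}. L v = i}" for i
  have "2 * part_cost E p F = (\<Sum>i<p. \<Sum>v\<in>F i. deg_in E (F i) v)"
    unfolding part_cost_def sum_distrib_left
    by (intro sum.cong refl sum_deg_in[symmetric]) (auto simp: F_def simple_graph_card_edge[OF sg])
  also have "\<dots> = (\<Sum>i<p. \<Sum>v\<in>F i. \<Sum>u<n. if L u = L v then adjacency E u v else 0)"
  proof (intro sum.cong refl)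
    fix i v assume "v \<in> F i"
    then have "F i = {u\<in>{..<n}. L u = L v}" unfolding F_def by auto
    then show "deg_in E (F i) v = (\<Sum>u<n. if L u = L v then adjacency E u v else 0)"
      using deg_in_filter_eq_sum_adjacency[of "{..<n}" E "\<lambda>u. L u = L v" v] by simp
  qed
  also have "\<dots> = (\<Sum>v<n. \<Sum>u<n. if L u = L v then adjacency E u v else 0)"
    unfolding F_def by (rule sum.group) (auto simp: L)
  finally show ?thesis unfolding F_def .
qed

(* An edge between different levels is counted once, an edge inside a level twice. *)
lemma sum_deg_in_upper_levels:
  assumes sg: "simple_graph n E" and L: "\<And>v. v < n \<Longrightarrow> L v < p"
  shows "(\<Sum>v<n. deg_in E {u\<in>{..<n}. L v \<le> L u} v)
       = card E + part_cost E p (\<lambda>i. {v\<in>{..<n}. L v = i})"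
proof -
  let ?a = "adjacency E"
  define X where "X = (\<Sum>v<n. \<Sum>u<n. if L v \<le> L u then ?a u v else 0)"
  have X_swap: "X = (\<Sum>v<n. \<Sum>u<n. if L u \<le> L v then ?a u v else 0)"
    unfolding X_def by (subst sum.swap) (intro sum.cong refl, metis adjacency_commute)
  have "2 * X = (\<Sum>v<n. \<Sum>u<n. (if L v \<le> L u then ?a u v else 0) + (if L u \<le> L v then ?a u v else 0))"
    by (subst mult_2, subst (2) X_swap) (simp add: X_def sum.distrib)
  also have "\<dots> = (\<Sum>v<n. \<Sum>u<n. ?a u v + (if L u = L v then ?a u v else 0))"
    by (intro sum.cong refl) auto
  also have "\<dots> = 2 * card E + 2 * part_cost E p (\<lambda>i. {v\<in>{..<n}. L v = i})"
    using sum_sum_adjacency[OF sg] twice_part_cost_levels[OF sg L] by (simp add: sum.distrib)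
  finally have "X = card E + part_cost E p (\<lambda>i. {v\<in>{..<n}. L v = i})"
    by simp
  then show ?thesis
    unfolding X_def using deg_in_filter_eq_sum_adjacency[of "{..<n}" E "\<lambda>u. L v \<le> L u" v for v]
    by simp
qed

section \<open>Fueredi's greedy levels\<close>

definition max_degree_vertex :: "nat set set \<Rightarrow> nat set \<Rightarrow> nat" where
  "max_degree_vertex E S = (SOME x. x \<in> S \<and> (\<forall>y\<in>S. deg_in E S y \<le> deg_in E S x))"

primrec greedy_nbhd :: "nat set set \<Rightarrow> nat \<Rightarrow> nat \<Rightarrow> nat set" where
  "greedy_nbhd E n 0 = {..<n}"
| "greedy_nbhd E n (Suc i) =
     {u \<in> greedy_nbhd E n i. {u, max_degree_vertex E (greedy_nbhd E n i)} \<in> E \<and>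
        u \<noteq> max_degree_vertex E (greedy_nbhd E n i)}"

definition greedy_level :: "nat set set \<Rightarrow> nat \<Rightarrow> nat \<Rightarrow> nat \<Rightarrow> nat" where
  "greedy_level E n p v = Max {i. i < p \<and> v \<in> greedy_nbhd E n i}"

lemma max_degree_vertex:
  assumes "finite S" and "S \<noteq> {}"
  shows "max_degree_vertex E S \<in> S \<and> (\<forall>y\<in>S. deg_in E S y \<le> deg_in E S (max_degree_vertex E S))"
proof -
  have "Max (deg_in E S ` S) \<in> deg_in E S ` S"
    using assms by (intro Max_in) auto
  then obtain x where "x \<in> S" "deg_in E S x = Max (deg_in E S ` S)"
    by auto
  then have "x \<in> S \<and> (\<forall>y\<in>S. deg_in E S y \<le> deg_in E S x)"
    using assms(1) by simp
  then show ?thesis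
    unfolding max_degree_vertex_def by (rule someI)
qed

lemma greedy_nbhd_antimono: "j \<le> i \<Longrightarrow> greedy_nbhd E n i \<subseteq> greedy_nbhd E n j"
proof (induction i)
  case (Suc i)
  then show ?case
    by (cases "j = Suc i") (auto simp del: greedy_nbhd.simps simp: greedy_nbhd.simps(2))
qed simp

lemma greedy_nbhd_subset: "greedy_nbhd E n i \<subseteq> {..<n}"
  using greedy_nbhd_antimono[of 0 i E n] by simp

lemma finite_greedy_nbhd: "finite (greedy_nbhd E n i)"
  by (rule finite_subset[OF greedy_nbhd_subset]) simp

lemma greedy_nbhd_adjacent:
  assumes "u \<in> greedy_nbhd E n j" and "i < j"
  shows "{u, max_degree_vertex E (greedy_nbhd E n i)} \<in> E \<and> u \<noteq> max_degree_vertex E (greedy_nbhd E n i)"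
proof -
  have "u \<in> greedy_nbhd E n (Suc i)"
    using assms greedy_nbhd_antimono[of "Suc i" j E n] by (meson Suc_leI subsetD)
  then show ?thesis
    unfolding greedy_nbhd.simps(2) by blast
qed

lemma deg_in_greedy_nbhd_le:
  assumes "v \<in> greedy_nbhd E n i"
  shows "deg_in E (greedy_nbhd E n i) v \<le> card (greedy_nbhd E n (Suc i))"
proof -
  have "deg_in E (greedy_nbhd E n i) v \<le> deg_in E (greedy_nbhd E n i) (max_degree_vertex E (greedy_nbhd E n i))"
    using max_degree_vertex[OF finite_greedy_nbhd] assms by blast
  also have "\<dots> = card (greedy_nbhd E n (Suc i))"
    unfolding deg_in_def by simp
  finally show ?thesis .
qed

lemma greedy_level_less:
  assumes "v < n" and "0 < p"
  shows "greedy_level E n p v < p"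
proof -
  have "0 \<in> {i. i < p \<and> v \<in> greedy_nbhd E n i}"
    using assms by simp
  then show ?thesis
    unfolding greedy_level_def by (subst Max_less_iff) auto
qed

lemma greedy_nbhd_eq_upper_levels:
  assumes "i < p"
  shows "greedy_nbhd E n i = {u\<in>{..<n}. i \<le> greedy_level E n p u}"
proof (intro set_eqI iffI)
  fix u assume u: "u \<in> greedy_nbhd E n i"
  then have "i \<le> greedy_level E n p u"
    unfolding greedy_level_def using assms by (intro Max_ge) auto
  then show "u \<in> {u\<in>{..<n}. i \<le> greedy_level E n p u}"
    using u greedy_nbhd_subset by blast
next
  fix u assume u: "u \<in> {u\<in>{..<n}. i \<le> greedy_level E n p u}"
  have "greedy_level E n p u \<in> {i. i < p \<and> u \<in> greedy_nbhd E n i}"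
    unfolding greedy_level_def using u assms
    by (intro Max_in) (auto intro!: exI[of _ 0])
  then show "u \<in> greedy_nbhd E n i"
    using u greedy_nbhd_antimono[of i "greedy_level E n p u" E n] by auto
qed

lemma card_greedy_nbhd_less:
  assumes no_book: "\<not> contains_book n E p q" and "q \<ge> 1"
  shows "card (greedy_nbhd E n p) < q"
proof (rule ccontr)
  assume "\<not> card (greedy_nbhd E n p) < q"
  then obtain Q where Q: "Q \<subseteq> greedy_nbhd E n p" "card Q = q"
    by (meson not_less obtain_subset_with_card_n)
  then have "greedy_nbhd E n p \<noteq> {}"
    using \<open>q \<ge> 1\<close> by auto
  define x where "x i = max_degree_vertex E (greedy_nbhd E n i)" for i
  have x_in: "x i \<in> greedy_nbhd E n i" if "i < p" for i
  proof -
    have "greedy_nbhd E n i \<noteq> {}"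
      using greedy_nbhd_antimono[of i p E n] that \<open>greedy_nbhd E n p \<noteq> {}\<close> by auto
    then show ?thesis
      unfolding x_def using max_degree_vertex[OF finite_greedy_nbhd] by blast
  qed
  have x_adj: "{x i, x j} \<in> E \<and> x i \<noteq> x j" if "i < j" "j < p" for i j
    using greedy_nbhd_adjacent[OF x_in[OF that(2)] that(1)] unfolding x_def
    by (simp add: insert_commute)
  have Q_adj: "{x i, u} \<in> E \<and> u \<noteq> x i" if "i < p" "u \<in> Q" for i u
    using greedy_nbhd_adjacent[of u E n p i] Q that unfolding x_def by (auto simp: insert_commute)
  have "inj_on x {..<p}"
    using x_adj by (intro linorder_inj_onI') auto
  have "contains_book n E p q"
    unfolding contains_book_def
  proof (intro exI conjI)
    show "x ` {..<p} \<subseteq> {..<n}"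
      using x_in greedy_nbhd_subset by blast
    show "Q \<subseteq> {..<n}"
      using Q greedy_nbhd_subset by blast
    show "x ` {..<p} \<inter> Q = {}"
      using Q_adj by blast
    show "card (x ` {..<p}) = p"
      using \<open>inj_on x {..<p}\<close> by (simp add: card_image)
    show "\<forall>u\<in>x ` {..<p}. \<forall>v\<in>x ` {..<p}. u \<noteq> v \<longrightarrow> {u, v} \<in> E"
    proof (intro ballI impI)
      fix u v assume "u \<in> x ` {..<p}" "v \<in> x ` {..<p}" "u \<noteq> v"
      then obtain i j where "i < p" "j < p" "i \<noteq> j" "u = x i" "v = x j"
        by auto
      then show "{u, v} \<in> E"
        using x_adj[of i j] x_adj[of j i] by (cases "i < j") (auto simp: insert_commute)
    qed
    show "\<forall>u\<in>x ` {..<p}. \<forall>v\<in>Q. {u, v} \<in> E"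
      using Q_adj by blast
  qed (rule Q(2))
  then show False
    using no_book by simp
qed

lemma deg_in_upper_greedy_levels_le:
  assumes no_book: "\<not> contains_book n E p q" and "q \<ge> 1" and "0 < p" and "v < n"
  shows "deg_in E {u\<in>{..<n}. greedy_level E n p v \<le> greedy_level E n p u} v
       \<le> card {u\<in>{..<n}. greedy_level E n p v < greedy_level E n p u} + q"
proof -
  let ?L = "greedy_level E n p"
  let ?i = "?L v"
  have "?i < p"
    using greedy_level_less \<open>v < n\<close> \<open>0 < p\<close> .
  then have A: "greedy_nbhd E n ?i = {u\<in>{..<n}. ?i \<le> ?L u}"
    by (rule greedy_nbhd_eq_upper_levels)
  have "deg_in E {u\<in>{..<n}. ?i \<le> ?L u} v \<le> card (greedy_nbhd E n (Suc ?i))"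
    using deg_in_greedy_nbhd_le[of v E n ?i] A \<open>v < n\<close> by simp
  also have "\<dots> \<le> card {u\<in>{..<n}. ?i < ?L u} + q"
  proof (cases "Suc ?i < p")
    case True
    then show ?thesis
      using greedy_nbhd_eq_upper_levels[OF True] by (simp add: Suc_le_eq)
  next
    case False
    then have "Suc ?i = p"
      using \<open>?i < p\<close> by simp
    then show ?thesis
      using card_greedy_nbhd_less[OF no_book \<open>q \<ge> 1\<close>] by simp
  qed
  finally show ?thesis .
qed

lemma card_plus_part_cost_greedy_levels_le:
  assumes sg: "simple_graph n E" and no_book: "\<not> contains_book n E p q" and "q \<ge> 1" and "0 < p"
  shows "card E + part_cost E p (\<lambda>i. {v\<in>{..<n}. greedy_level E n p v = i})
       \<le> (\<Sum>v<n. card {u\<in>{..<n}. greedy_level E n p v < greedy_level E n p u}) + q * n"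
proof -
  let ?L = "greedy_level E n p"
  have "card E + part_cost E p (\<lambda>i. {v\<in>{..<n}. ?L v = i})
      = (\<Sum>v<n. deg_in E {u\<in>{..<n}. ?L v \<le> ?L u} v)"
    using sum_deg_in_upper_levels[OF sg greedy_level_less] \<open>0 < p\<close> by simp
  also have "\<dots> \<le> (\<Sum>v<n. card {u\<in>{..<n}. ?L v < ?L u} + q)"
    using deg_in_upper_greedy_levels_le[OF no_book \<open>q \<ge> 1\<close> \<open>0 < p\<close>] by (intro sum_mono) simp
  also have "\<dots> = (\<Sum>v<n. card {u\<in>{..<n}. ?L v < ?L u}) + q * n"
    by (simp add: sum.distrib mult.commute)
  finally show ?thesis .
qed

section \<open>A dense admissible graph\<close>

lemma colorable_mono: "colorable n E k \<Longrightarrow> k \<le> m \<Longrightarrow> colorable n E m"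
  unfolding colorable_def by (meson order_less_le_trans)

lemma less_chromatic_number:
  assumes "\<not> colorable n E p"
  shows "p < chromatic_number n E"
proof -
  have "colorable n E n"
    unfolding colorable_def by (intro exI[of _ id]) auto
  then have "colorable n E (chromatic_number n E)"
    unfolding chromatic_number_def by (rule LeastI)
  then show ?thesis
    using assms colorable_mono not_less by blast
qed

definition c5_adjacent :: "nat \<Rightarrow> nat \<Rightarrow> bool" where
  "c5_adjacent a b \<longleftrightarrow> (a + 1) mod 5 = b \<or> (b + 1) mod 5 = a"

(* A K_{p-2} on the vertices below p-2, joined to a 5-cycle on p-2, ..., p+2; from p+3 on,
   disjointly, the complete multipartite graph whose classes are the fibres of l. *)
definition witness_adjacent :: "nat \<Rightarrow> (nat \<Rightarrow> nat) \<Rightarrow> nat \<Rightarrow> nat \<Rightarrow> bool" where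
  "witness_adjacent p l u v \<longleftrightarrow>
     (u < p + 3 \<and> v < p + 3 \<and> (u < p - 2 \<or> v < p - 2 \<or> c5_adjacent (u - (p - 2)) (v - (p - 2))))
     \<or> (p + 3 \<le> u \<and> p + 3 \<le> v \<and> l u \<noteq> l v)"

definition witness_graph :: "nat \<Rightarrow> nat \<Rightarrow> (nat \<Rightarrow> nat) \<Rightarrow> nat set set" where
  "witness_graph n p l = {{u, v} | u v. u < n \<and> v < n \<and> u \<noteq> v \<and> witness_adjacent p l u v}"

lemma c5_adjacent_iff:
  assumes "a < 5" "b < 5"
  shows "c5_adjacent a b \<longleftrightarrow> a + 1 = b \<or> b + 1 = a \<or> {a, b} = {0, 4}"
proof -
  have "(x + 1) mod 5 = (if x = 4 then 0 else x + 1)" if "x < 5" for x :: nat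
    using that by (simp add: mod_if)
  then show ?thesis
    using assms unfolding c5_adjacent_def by (auto simp: doubleton_eq_iff)
qed

lemma c5_adjacent_no_triangle:
  assumes "a < 5" "b < 5" "c < 5" "c5_adjacent a b" "c5_adjacent a c" "c5_adjacent b c"
  shows False
  using assms c5_adjacent_iff by (auto simp: doubleton_eq_iff)

lemma card_c5_clique_le:
  assumes "C \<subseteq> {..<5}"
    and clique: "\<And>a b. a \<in> C \<Longrightarrow> b \<in> C \<Longrightarrow> a \<noteq> b \<Longrightarrow> c5_adjacent a b"
  shows "card C \<le> 2"
proof (rule ccontr)
  assume "\<not> card C \<le> 2"
  then obtain B where "B \<subseteq> C" "card B = 3"
    by (metis not_le Suc_leI numeral_2_eq_2 numeral_3_eq_3 obtain_subset_with_card_n)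
  then obtain a b c where "a \<in> C" "b \<in> C" "c \<in> C" "a \<noteq> b" "a \<noteq> c" "b \<noteq> c"
    by (auto simp: card_3_iff)
  then show False
    using c5_adjacent_no_triangle clique assms(1) by blast
qed

lemma witness_adjacent_commute: "witness_adjacent p l u v = witness_adjacent p l v u"
  unfolding witness_adjacent_def c5_adjacent_def by auto

lemma mem_witness_graph:
  "{u, v} \<in> witness_graph n p l \<longleftrightarrow> u < n \<and> v < n \<and> u \<noteq> v \<and> witness_adjacent p l u v"
proof
  assume "{u, v} \<in> witness_graph n p l"
  then obtain u' v' where uv: "{u, v} = {u', v'}" "u' < n" "v' < n" "u' \<noteq> v'" "witness_adjacent p l u' v'"
    unfolding witness_graph_def by blast
  then have "(u = u' \<and> v = v') \<or> (u = v' \<and> v = u')"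
    by (simp add: doubleton_eq_iff)
  then show "u < n \<and> v < n \<and> u \<noteq> v \<and> witness_adjacent p l u v"
    using uv witness_adjacent_commute by metis
qed (auto simp: witness_graph_def)

lemma simple_graph_witness_graph: "simple_graph n (witness_graph n p l)"
  unfolding simple_graph_def witness_graph_def by auto

lemma finite_witness_graph: "finite (witness_graph n p l)"
proof (rule finite_subset)
  show "witness_graph n p l \<subseteq> Pow {..<n}"
    unfolding witness_graph_def by auto
qed simp

lemma card_clique_witness_graph_le:
  assumes "p \<ge> 3" and l: "\<And>v. v < n \<Longrightarrow> l v < p" and "C \<subseteq> {..<n}"
    and clique: "\<And>u v. u \<in> C \<Longrightarrow> v \<in> C \<Longrightarrow> u \<noteq> v \<Longrightarrow> witness_adjacent p l u v"
  shows "card C \<le> p"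
proof (cases "\<exists>c\<in>C. c < p + 3")
  case True
  then obtain c where c: "c \<in> C" "c < p + 3"
    by blast
  have small: "C \<subseteq> {..<p + 3}"
    using clique[OF c(1)] c(2) unfolding witness_adjacent_def by fastforce
  define D where "D = C - {..<p - 2}"
  have "card (C \<inter> {..<p - 2}) \<le> p - 2"
    using card_mono[of "{..<p - 2}" "C \<inter> {..<p - 2}"] by simp
  have "inj_on (\<lambda>x. x - (p - 2)) D"
    by (rule inj_onI) (auto simp: D_def)
  moreover have "card ((\<lambda>x. x - (p - 2)) ` D) \<le> 2"
  proof (rule card_c5_clique_le)
    show "(\<lambda>x. x - (p - 2)) ` D \<subseteq> {..<5}"
      using small \<open>p \<ge> 3\<close> by (auto simp: D_def)
    show "c5_adjacent a b"
      if ab: "a \<in> (\<lambda>x. x - (p - 2)) ` D" "b \<in> (\<lambda>x. x - (p - 2)) ` D" "a \<noteq> b" for a b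
    proof -
      obtain x y where xy: "x \<in> D" "y \<in> D" "a = x - (p - 2)" "b = y - (p - 2)"
        using ab(1,2) by blast
      then have "witness_adjacent p l x y"
        using clique ab(3) by (auto simp: D_def)
      then show ?thesis
        using xy small unfolding D_def witness_adjacent_def by auto
    qed
  qed
  ultimately have "card D \<le> 2"
    by (simp add: card_image)
  have "finite C"
    using \<open>C \<subseteq> {..<n}\<close> by (rule finite_subset) simp
  then have "card C = card (C \<inter> {..<p - 2}) + card D"
    unfolding D_def by (metis card_Int_Diff)
  then show ?thesis
    using \<open>card (C \<inter> {..<p - 2}) \<le> p - 2\<close> \<open>card D \<le> 2\<close> \<open>p \<ge> 3\<close> by linarith
next
  case False
  have "inj_on l C"
    using clique False unfolding witness_adjacent_def by (meson inj_onI not_le)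
  moreover have "l ` C \<subseteq> {..<p}"
    using l \<open>C \<subseteq> {..<n}\<close> by auto
  ultimately show ?thesis
    using card_mono[of "{..<p}" "l ` C"] by (simp add: card_image)
qed

(* The clique on the vertices below p-2 uses p-2 colours, which leaves only two colours
   for the 5-cycle. *)
lemma witness_graph_not_colorable:
  assumes "p \<ge> 3" and "n \<ge> p + 3"
  shows "\<not> colorable n (witness_graph n p l) p"
proof
  assume "colorable n (witness_graph n p l) p"
  then obtain c where c_lt: "\<And>v. v < n \<Longrightarrow> c v < p"
    and proper: "\<And>u v. u < n \<Longrightarrow> v < n \<Longrightarrow> u \<noteq> v \<Longrightarrow> witness_adjacent p l u v
      \<Longrightarrow> c u \<noteq> c v"
    unfolding colorable_def mem_witness_graph by blast
  define w where "w k = p - 2 + k" for k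
  let ?T = "{..<p} - c ` {..<p - 2}"
  have "inj_on c {..<p - 2}"
  proof (rule linorder_inj_onI')
    fix i j assume "i \<in> {..<p - 2}" "j \<in> {..<p - 2}" "i < j"
    then show "c i \<noteq> c j"
      using assms by (intro proper) (auto simp: witness_adjacent_def)
  qed
  moreover have "c ` {..<p - 2} \<subseteq> {..<p}"
    using c_lt assms by auto
  ultimately have "card ?T = 2"
    using assms by (simp add: card_Diff_subset card_image)
  then obtain a b where T: "?T = {a, b}"
    by (auto simp: card_2_iff)
  have w_colors: "c (w k) = a \<or> c (w k) = b" if "k < 5" for k
  proof -
    have "c x \<noteq> c (w k)" if "x < p - 2" for x
      using that \<open>k < 5\<close> assms by (intro proper) (auto simp: w_def witness_adjacent_def)
    then have "c (w k) \<notin> c ` {..<p - 2}"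
      by fastforce
    then have "c (w k) \<in> ?T"
      using c_lt[of "w k"] \<open>k < 5\<close> assms by (simp add: w_def)
    then show ?thesis
      using T by blast
  qed
  have w_proper: "c (w k) \<noteq> c (w k')" if "k < 5" "k' < 5" "c5_adjacent k k'" for k k'
  proof (rule proper)
    show "w k \<noteq> w k'"
      using that c5_adjacent_iff[OF that(1,2)] by (auto simp: w_def)
    have "w k - (p - 2) = k" "w k' - (p - 2) = k'" "w k < p + 3" "w k' < p + 3"
      using that assms by (auto simp: w_def)
    then show "witness_adjacent p l (w k) (w k')"
      using that(3) unfolding witness_adjacent_def by simp
  qed (use that assms in \<open>auto simp: w_def\<close>)
  have "c5_adjacent 0 1" "c5_adjacent 1 2" "c5_adjacent 2 3" "c5_adjacent 3 4" "c5_adjacent 4 0"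
    by (simp_all add: c5_adjacent_def)
  then have "c (w 0) \<noteq> c (w 1)" "c (w 1) \<noteq> c (w 2)" "c (w 2) \<noteq> c (w 3)" "c (w 3) \<noteq> c (w 4)"
    "c (w 4) \<noteq> c (w 0)"
    using w_proper by simp_all
  then show False
    using w_colors[of 0] w_colors[of 1] w_colors[of 2] w_colors[of 3] w_colors[of 4] by auto
qed

lemma admissible_witness_graph:
  assumes "p \<ge> 3" and "n \<ge> p + 3" and "q \<ge> 1" and l: "\<And>v. v < n \<Longrightarrow> l v < p"
  shows "admissible n p q (witness_graph n p l)"
  unfolding admissible_def
proof (intro conjI)
  show "simple_graph n (witness_graph n p l)"
    by (rule simple_graph_witness_graph)
  show "p < chromatic_number n (witness_graph n p l)"
    using witness_graph_not_colorable[OF assms(1,2)] by (rule less_chromatic_number)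
  show "\<not> contains_book n (witness_graph n p l) p q"
  proof
    assume "contains_book n (witness_graph n p l) p q"
    then obtain K Q where KQ: "K \<subseteq> {..<n}" "Q \<subseteq> {..<n}" "K \<inter> Q = {}" "card K = p" "card Q = q"
      "\<forall>u\<in>K. \<forall>v\<in>K. u \<noteq> v \<longrightarrow> {u, v} \<in> witness_graph n p l"
      "\<forall>u\<in>K. \<forall>v\<in>Q. {u, v} \<in> witness_graph n p l"
      unfolding contains_book_def by blast
    obtain z where "z \<in> Q"
      using KQ(5) \<open>q \<ge> 1\<close> by fastforce
    have "card (insert z K) \<le> p"
    proof (rule card_clique_witness_graph_le[OF \<open>p \<ge> 3\<close> l])
      show "insert z K \<subseteq> {..<n}"
        using KQ \<open>z \<in> Q\<close> by blast
      show "witness_adjacent p l u v" if "u \<in> insert z K" "v \<in> insert z K" "u \<noteq> v" for u v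
        using KQ(6,7) \<open>z \<in> Q\<close> that
        by (auto simp: mem_witness_graph intro: witness_adjacent_commute[THEN iffD1])
    qed
    moreover have "finite K"
      using KQ(4) \<open>p \<ge> 3\<close> by (intro card_ge_0_finite) simp
    moreover have "z \<notin> K"
      using KQ(3) \<open>z \<in> Q\<close> by blast
    ultimately show False
      using KQ(4) by simp
  qed
qed

lemma sum_card_upper_le_card_witness_graph:
  "(\<Sum>v<n. card {u\<in>{..<n}. l v < l u}) \<le> card (witness_graph n p l) + 2 * ((p + 3) * n)"
proof -
  let ?s = "p + 3"
  define S where "S = (SIGMA v:{..<n}. {u\<in>{..<n}. l v < l u})"
  define S' where "S' = {(v, u) \<in> S. ?s \<le> v \<and> ?s \<le> u}"
  define B where "B = {..<?s} \<times> {..<n} \<union> {..<n} \<times> {..<?s}"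
  have "finite S'"
    unfolding S'_def S_def by (rule finite_subset[of _ "{..<n} \<times> {..<n}"]) auto
  then have "card S \<le> card (S' \<union> B)"
    by (intro card_mono) (auto simp: S_def S'_def B_def)
  also have "\<dots> \<le> card S' + card B"
    by (rule card_Un_le)
  also have "card B \<le> 2 * (?s * n)"
    using card_Un_le[of "{..<?s} \<times> {..<n}" "{..<n} \<times> {..<?s}"] by (simp add: B_def mult.commute)
  also have "card S' \<le> card (witness_graph n p l)"
  proof (rule card_inj_on_le[OF _ _ finite_witness_graph])
    show "inj_on (\<lambda>(v, u). {v, u}) S'"
    proof (rule inj_onI, clarify)
      fix v u v' u' assume "(v, u) \<in> S'" "(v', u') \<in> S'" "{v, u} = {v', u'}"
      then show "v = v' \<and> u = u'"
        by (auto simp: S'_def S_def doubleton_eq_iff)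
    qed
    show "(\<lambda>(v, u). {v, u}) ` S' \<subseteq> witness_graph n p l"
      by (auto simp: S'_def S_def mem_witness_graph witness_adjacent_def)
  qed
  finally show ?thesis
    unfolding S_def by simp
qed

section \<open>Edges inside the parts of an optimal partition\<close>

lemma part_cost_optimal_partition_le:
  assumes "p \<ge> 3" and "q \<ge> 1" and "n \<ge> p + 3" and G: "in_GG n p q E"
    and V: "optimal_partition n E p V"
  shows "part_cost E p V \<le> (2 * p + q + 6) * n"
proof -
  have sg: "simple_graph n E" and no_book: "\<not> contains_book n E p q"
    and extremal: "\<And>E'. admissible n p q E' \<Longrightarrow> card E' \<le> card E"
    using G unfolding in_GG_def admissible_def by auto
  let ?L = "greedy_level E n p"
  define F where "F i = {v\<in>{..<n}. ?L v = i}" for i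
  have L_less: "\<And>v. v < n \<Longrightarrow> ?L v < p"
    using greedy_level_less \<open>p \<ge> 3\<close> by simp
  have "card E + part_cost E p F \<le> (\<Sum>v<n. card {u\<in>{..<n}. ?L v < ?L u}) + q * n"
    unfolding F_def using card_plus_part_cost_greedy_levels_le[OF sg no_book \<open>q \<ge> 1\<close>] \<open>p \<ge> 3\<close>
    by simp
  also have "\<dots> \<le> card (witness_graph n p ?L) + 2 * ((p + 3) * n) + q * n"
    using sum_card_upper_le_card_witness_graph by simp
  also have "card (witness_graph n p ?L) \<le> card E"
    by (intro extremal admissible_witness_graph assms(1-3) L_less)
  finally have "part_cost E p F \<le> (2 * p + q + 6) * n"
    by (simp add: algebra_simps)
  moreover have "is_partition n p F"
    unfolding is_partition_def F_def using L_less by auto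
  then have "part_cost E p V \<le> part_cost E p F"
    using V unfolding optimal_partition_def by blast
  ultimately show ?thesis
    by simp
qed

lemma card_high_degree_vertices_le:
  fixes t :: real
  assumes sg: "simple_graph n E" and V: "is_partition n p V" and "t \<ge> 0"
  shows "t * real (card (\<Union>i<p. {v \<in> V i. t \<le> real (deg_in E (V i) v)}))
       \<le> 2 * real (part_cost E p V)"
proof -
  define W where "W i = {v \<in> V i. t \<le> real (deg_in E (V i) v)}" for i
  have "V i \<subseteq> {..<n}" if "i < p" for i
    using V that unfolding is_partition_def by blast
  then have finV: "finite (V i)" if "i < p" for i
    using that by (meson finite_lessThan finite_subset)
  have W_le: "t * real (card (W i)) \<le> 2 * real (edges_in E (V i))" if "i < p" for i
  proof -
    have "t * real (card (W i)) = (\<Sum>v\<in>W i. t)"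
      by simp
    also have "\<dots> \<le> (\<Sum>v\<in>W i. real (deg_in E (V i) v))"
      by (rule sum_mono) (simp add: W_def)
    also have "\<dots> \<le> (\<Sum>v\<in>V i. real (deg_in E (V i) v))"
      using finV[OF that] by (intro sum_mono2) (auto simp: W_def)
    also have "\<dots> = 2 * real (edges_in E (V i))"
      using sum_deg_in[OF finV[OF that] simple_graph_card_edge[OF sg]] by (simp flip: of_nat_sum)
    finally show ?thesis .
  qed
  have "t * real (card (\<Union>i<p. W i)) \<le> t * (\<Sum>i<p. real (card (W i)))"
    using card_UN_le[of "{..<p}" W] \<open>t \<ge> 0\<close> by (intro mult_left_mono) (simp_all flip: of_nat_sum)
  also have "\<dots> \<le> (\<Sum>i<p. 2 * real (edges_in E (V i)))"
    unfolding sum_distrib_left using W_le by (intro sum_mono) simp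
  also have "\<dots> = 2 * real (part_cost E p V)"
    unfolding part_cost_def by (simp add: sum_distrib_left)
  finally show ?thesis
    unfolding W_def .
qed

theorem lemma3p3:
  fixes p q :: nat and \<eta> :: real
  assumes "p \<ge> 3" and "q \<ge> 1" and "0 < \<eta>" and "\<eta> < 1 / (7 * real p ^ 5 * real q)"
  shows "\<exists>N. \<forall>n\<ge>N. \<forall>E V.
      in_GG n p q E \<and>
      (\<forall>F. in_GG n p q F \<longrightarrow> min_degree n E \<le> min_degree n F) \<and>
      optimal_partition n E p V \<longrightarrow>
      real (card (\<Union>i<p. {v \<in> V i. real (deg_in E (V i) v) \<ge> 2 * \<eta> * real n})) \<le> \<eta> * real n / 2"
proof -
  define C where "C = real (2 * p + q + 6)"
  define N where "N = max (p + 3) (nat \<lceil>2 * C / \<eta>\<^sup>2\<rceil>)"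
  show ?thesis
  proof (intro exI[of _ N] allI impI)
    fix n E V
    assume "N \<le> n"
      and "in_GG n p q E \<and> (\<forall>F. in_GG n p q F \<longrightarrow> min_degree n E \<le> min_degree n F)
        \<and> optimal_partition n E p V"
    then have G: "in_GG n p q E" and V: "optimal_partition n E p V"
      by auto
    have "n \<ge> p + 3"
      using \<open>N \<le> n\<close> by (simp add: N_def)
    have "2 * C / \<eta>\<^sup>2 \<le> real n"
      using \<open>N \<le> n\<close> unfolding N_def by linarith
    then have n_large: "2 * C \<le> \<eta>\<^sup>2 * real n"
      using \<open>0 < \<eta>\<close> by (simp add: field_simps)
    let ?W = "real (card (\<Union>i<p. {v \<in> V i. real (deg_in E (V i) v) \<ge> 2 * \<eta> * real n}))"
    have "simple_graph n E" and "is_partition n p V"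
      using G V unfolding in_GG_def admissible_def optimal_partition_def by auto
    then have "2 * \<eta> * real n * ?W \<le> 2 * real (part_cost E p V)"
      using \<open>0 < \<eta>\<close> by (intro card_high_degree_vertices_le) auto
    also have "\<dots> \<le> 2 * (C * real n)"
      using part_cost_optimal_partition_le[OF assms(1,2) \<open>n \<ge> p + 3\<close> G V] unfolding C_def
      by (simp only: of_nat_mult[symmetric] of_nat_le_iff mult_le_cancel_left) simp
    finally have "\<eta> * ?W \<le> C"
      using \<open>n \<ge> p + 3\<close> by (simp add: mult.assoc mult.left_commute)
    also have "\<dots> \<le> \<eta> * (\<eta> * real n / 2)"
      using n_large by (simp add: power2_eq_square)
    finally show "?W \<le> \<eta> * real n / 2"
      using \<open>0 < \<eta>\<close> by simp
  qed
qed

end
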